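(* Let $\mathcal{U}$ be a small category and $\mathcal{A}$ a geometric prestack of small $k$-linear categories on $\mathcal{U}$. Let $\kappa$ be a cardinal with $\kappa\ge\sup\{\aleph_0,|\mathcal{U}|,|\mathcal{A}|\}$. Let $M\in\mathsf{Qch}(\mathcal{A})$ and let $X\subseteq M$ be a subset with $|X|\le\kappa$. Then there is a subobject $N\subseteq M$ in $\mathsf{Qch}(\mathcal{A})$ with $X\subseteq N$ and $|N|\le\kappa$.
   Context: $k$ is a commutative ring. A prestack $\mathcal{A}$ on $\mathcal{U}$: small $k$-linear categories $\mathcal{A}(U)$, $k$-linear functors $u^*$, coherent natural isomorphisms $c^{u,v}\colon v^*u^*\to(uv)^*$, $z^U\colon1\to(1_U)^*$. $\mathsf{Mod}(\mathfrak{a})$ = $k$-linear functors $\mathfrak{a}^{\mathrm{op}}\to\mathsf{Mod}(k)$; restriction $-\otimes_u\mathcal{A}(V)$ is the colimit preserving extension of $u^*$. $\mathsf{Qch}(\mathcal{A})$: families $M_U\in\mathsf{Mod}(\mathcal{A}(U))$ with isomorphisms $\varphi_u\colon M_U\otimes_u\mathcal{A}(V)\to M_V$ compatible with the twists induced by $c$; morphisms compatible families. Geometric: every $-\otimes_u\mathcal{A}(V)$ is exact. Cardinalities: $|\mathcal{U}|=\sum_{U,V}|\mathcal{U}(V,U)|$; for a small $k$-linear category $|\mathfrak{a}|=\sum_{A,A'}|\mathfrak{a}(A,A')|$ (cardinality of its morphism set); $|\mathcal{A}|=\sum_U|\mathcal{A}(U)|$. A subset $X\subseteq M$ consists of subsets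 $X_U(A)\subseteq M_U(A)$ for all $U$ and $A\in\mathcal{A}(U)$, and $|X|=\sum_U\sum_A|X_U(A)|$. *)

theory Defs
  imports Main
begin

abbreviation cardle :: "'a set \<Rightarrow> 'b set \<Rightarrow> bool" where
  "cardle A B \<equiv> ordLeq3 (card_of A) (card_of B)"

record ('u, 'f) smallcat =
  cOb :: "'u set"
  cHom :: "'u \<Rightarrow> 'u \<Rightarrow> 'f set"      \<comment> \<open>cHom V U = morphisms V \<rightarrow> U\<close>
  ccomp :: "'f \<Rightarrow> 'f \<Rightarrow> 'f"        \<comment> \<open>ccomp u v = u \<circ> v\<close>
  cid :: "'u \<Rightarrow> 'f"

definition is_smallcat :: "('u, 'f, 'z) smallcat_scheme \<Rightarrow> bool" where
  "is_smallcat C \<longleftrightarrow>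
     (\<forall>A\<in>cOb C. cid C A \<in> cHom C A A) \<and>
     (\<forall>A\<in>cOb C. \<forall>B\<in>cOb C. \<forall>D\<in>cOb C. \<forall>f\<in>cHom C A B. \<forall>g\<in>cHom C B D.
        ccomp C g f \<in> cHom C A D) \<and>
     (\<forall>A\<in>cOb C. \<forall>B\<in>cOb C. \<forall>f\<in>cHom C A B.
        ccomp C (cid C B) f = f \<and> ccomp C f (cid C A) = f) \<and>
     (\<forall>A\<in>cOb C. \<forall>B\<in>cOb C. \<forall>D\<in>cOb C. \<forall>E\<in>cOb C.
        \<forall>f\<in>cHom C A B. \<forall>g\<in>cHom C B D. \<forall>h\<in>cHom C D E.
        ccomp C h (ccomp C g f) = ccomp C (ccomp C h g) f)"

text \<open>Hom-sets are k-submodules of an ambient abelian group of morphisms 'h.\<close>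

record ('o, 'h, 'k) klcat =
  kOb :: "'o set"
  kHom :: "'o \<Rightarrow> 'o \<Rightarrow> 'h set"
  kcomp :: "'h \<Rightarrow> 'h \<Rightarrow> 'h"        \<comment> \<open>kcomp g f = g \<circ> f\<close>
  kid :: "'o \<Rightarrow> 'h"
  ksmult :: "'k \<Rightarrow> 'h \<Rightarrow> 'h"

definition is_klcat :: "('o, 'h::ab_group_add, 'k::comm_ring_1) klcat \<Rightarrow> bool" where
  "is_klcat C \<longleftrightarrow>
     (\<forall>A\<in>kOb C. \<forall>B\<in>kOb C.
        0 \<in> kHom C A B \<and>
        (\<forall>f\<in>kHom C A B. \<forall>g\<in>kHom C A B. f + g \<in> kHom C A B) \<and>
        (\<forall>f\<in>kHom C A B. - f \<in> kHom C A B) \<and>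
        (\<forall>c. \<forall>f\<in>kHom C A B. ksmult C c f \<in> kHom C A B) \<and>
        (\<forall>c. \<forall>f\<in>kHom C A B. \<forall>g\<in>kHom C A B. ksmult C c (f + g) = ksmult C c f + ksmult C c g) \<and>
        (\<forall>c d. \<forall>f\<in>kHom C A B. ksmult C (c + d) f = ksmult C c f + ksmult C d f) \<and>
        (\<forall>c d. \<forall>f\<in>kHom C A B. ksmult C (c * d) f = ksmult C c (ksmult C d f)) \<and>
        (\<forall>f\<in>kHom C A B. ksmult C 1 f = f)) \<and>
     (\<forall>A\<in>kOb C. kid C A \<in> kHom C A A) \<and>
     (\<forall>A\<in>kOb C. \<forall>B\<in>kOb C. \<forall>D\<in>kOb C. \<forall>f\<in>kHom C A B. \<forall>g\<in>kHom C B D.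
        kcomp C g f \<in> kHom C A D) \<and>
     (\<forall>A\<in>kOb C. \<forall>B\<in>kOb C. \<forall>f\<in>kHom C A B.
        kcomp C (kid C B) f = f \<and> kcomp C f (kid C A) = f) \<and>
     (\<forall>A\<in>kOb C. \<forall>B\<in>kOb C. \<forall>D\<in>kOb C. \<forall>E\<in>kOb C.
        \<forall>f\<in>kHom C A B. \<forall>g\<in>kHom C B D. \<forall>h\<in>kHom C D E.
        kcomp C h (kcomp C g f) = kcomp C (kcomp C h g) f) \<and>
     \<comment> \<open>k-bilinearity of composition\<close>
     (\<forall>A\<in>kOb C. \<forall>B\<in>kOb C. \<forall>D\<in>kOb C. \<forall>f\<in>kHom C A B. \<forall>f'\<in>kHom C A B.
        \<forall>g\<in>kHom C B D. \<forall>g'\<in>kHom C B D. \<forall>c.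
        kcomp C (g + g') f = kcomp C g f + kcomp C g' f \<and>
        kcomp C g (f + f') = kcomp C g f + kcomp C g f' \<and>
        kcomp C (ksmult C c g) f = ksmult C c (kcomp C g f) \<and>
        kcomp C g (ksmult C c f) = ksmult C c (kcomp C g f))"

definition k_iso :: "('o, 'h, 'k) klcat \<Rightarrow> 'o \<Rightarrow> 'o \<Rightarrow> 'h \<Rightarrow> bool" where
  "k_iso C A B f \<longleftrightarrow> f \<in> kHom C A B \<and>
     (\<exists>g\<in>kHom C B A. kcomp C g f = kid C A \<and> kcomp C f g = kid C B)"

text \<open>For u : V \<rightarrow> U: pobj P u, pmor P u give the functor u^* : A(U) \<rightarrow> A(V);
  pc P u v A = c^{u,v}_A : v^* u^* A \<rightarrow> (uv)^* A;  pz P U A = z^U_A : A \<rightarrow> (1_U)^* A.\<close>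

record ('u, 'f, 'o, 'h, 'k) prestack =
  pcat :: "'u \<Rightarrow> ('o, 'h, 'k) klcat"
  pobj :: "'f \<Rightarrow> 'o \<Rightarrow> 'o"
  pmor :: "'f \<Rightarrow> 'h \<Rightarrow> 'h"
  pc :: "'f \<Rightarrow> 'f \<Rightarrow> 'o \<Rightarrow> 'h"
  pz :: "'u \<Rightarrow> 'o \<Rightarrow> 'h"

definition is_prestack ::
  "('u, 'f) smallcat \<Rightarrow> ('u, 'f, 'o, 'h::ab_group_add, 'k::comm_ring_1) prestack \<Rightarrow> bool" where
  "is_prestack UC P \<longleftrightarrow>
     is_smallcat UC \<and>
     (\<forall>U\<in>cOb UC. is_klcat (pcat P U)) \<and>
     \<comment> \<open>u^* is a k-linear functor A(U) \<rightarrow> A(V)\<close>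
     (\<forall>U\<in>cOb UC. \<forall>V\<in>cOb UC. \<forall>u\<in>cHom UC V U.
        (\<forall>A\<in>kOb (pcat P U). pobj P u A \<in> kOb (pcat P V)) \<and>
        (\<forall>A\<in>kOb (pcat P U). \<forall>B\<in>kOb (pcat P U). \<forall>f\<in>kHom (pcat P U) A B.
            pmor P u f \<in> kHom (pcat P V) (pobj P u A) (pobj P u B)) \<and>
        (\<forall>A\<in>kOb (pcat P U). pmor P u (kid (pcat P U) A) = kid (pcat P V) (pobj P u A)) \<and>
        (\<forall>A\<in>kOb (pcat P U). \<forall>B\<in>kOb (pcat P U). \<forall>D\<in>kOb (pcat P U).
           \<forall>f\<in>kHom (pcat P U) A B. \<forall>g\<in>kHom (pcat P U) B D.
            pmor P u (kcomp (pcat P U) g f) = kcomp (pcat P V) (pmor P u g) (pmor P u f)) \<and>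
        (\<forall>A\<in>kOb (pcat P U). \<forall>B\<in>kOb (pcat P U). \<forall>f\<in>kHom (pcat P U) A B.
           \<forall>g\<in>kHom (pcat P U) A B. \<forall>c.
            pmor P u (f + g) = pmor P u f + pmor P u g \<and>
            pmor P u (ksmult (pcat P U) c f) = ksmult (pcat P V) c (pmor P u f))) \<and>
     \<comment> \<open>c^{u,v} : v^* u^* \<rightarrow> (uv)^* natural isomorphism\<close>
     (\<forall>U\<in>cOb UC. \<forall>V\<in>cOb UC. \<forall>W\<in>cOb UC. \<forall>u\<in>cHom UC V U. \<forall>v\<in>cHom UC W V.
        (\<forall>A\<in>kOb (pcat P U).
           k_iso (pcat P W) (pobj P v (pobj P u A)) (pobj P (ccomp UC u v) A) (pc P u v A)) \<and>
        (\<forall>A\<in>kOb (pcat P U). \<forall>B\<in>kOb (pcat P U). \<forall>f\<in>kHom (pcat P U) A B.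
           kcomp (pcat P W) (pc P u v B) (pmor P v (pmor P u f)) =
           kcomp (pcat P W) (pmor P (ccomp UC u v) f) (pc P u v A))) \<and>
     \<comment> \<open>z^U : 1 \<rightarrow> (1_U)^* natural isomorphism\<close>
     (\<forall>U\<in>cOb UC.
        (\<forall>A\<in>kOb (pcat P U). k_iso (pcat P U) A (pobj P (cid UC U) A) (pz P U A)) \<and>
        (\<forall>A\<in>kOb (pcat P U). \<forall>B\<in>kOb (pcat P U). \<forall>f\<in>kHom (pcat P U) A B.
           kcomp (pcat P U) (pz P U B) f = kcomp (pcat P U) (pmor P (cid UC U) f) (pz P U A))) \<and>
     \<comment> \<open>coherence (associativity)\<close>
     (\<forall>U\<in>cOb UC. \<forall>V\<in>cOb UC. \<forall>W\<in>cOb UC. \<forall>T\<in>cOb UC.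
        \<forall>u\<in>cHom UC V U. \<forall>v\<in>cHom UC W V. \<forall>w\<in>cHom UC T W. \<forall>A\<in>kOb (pcat P U).
        kcomp (pcat P T) (pc P (ccomp UC u v) w A) (pmor P w (pc P u v A)) =
        kcomp (pcat P T) (pc P u (ccomp UC v w) A) (pc P v w (pobj P u A))) \<and>
     \<comment> \<open>coherence (units)\<close>
     (\<forall>U\<in>cOb UC. \<forall>V\<in>cOb UC. \<forall>u\<in>cHom UC V U. \<forall>A\<in>kOb (pcat P U).
        kcomp (pcat P V) (pc P (cid UC U) u A) (pmor P u (pz P U A)) = kid (pcat P V) (pobj P u A) \<and>
        kcomp (pcat P V) (pc P u (cid UC V) A) (pz P V (pobj P u A)) = kid (pcat P V) (pobj P u A))"

text \<open>A module M \<in> Mod(a) is a k-linear functor a^op \<rightarrow> Mod(k): M(A) = carrier M A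
  (a k-submodule of an ambient abelian group 'm), and for f : A \<rightarrow> A' the map
  M(f) = act M f : M(A') \<rightarrow> M(A).\<close>

record ('o, 'h, 'm, 'k) kmod =
  carrier :: "'o \<Rightarrow> 'm set"
  act :: "'h \<Rightarrow> 'm \<Rightarrow> 'm"
  msmult :: "'k \<Rightarrow> 'm \<Rightarrow> 'm"

definition is_kmod ::
  "('o, 'h::ab_group_add, 'k::comm_ring_1) klcat \<Rightarrow> ('o, 'h, 'm::ab_group_add, 'k) kmod \<Rightarrow> bool" where
  "is_kmod C M \<longleftrightarrow>
     (\<forall>A\<in>kOb C.
        0 \<in> carrier M A \<and>
        (\<forall>x\<in>carrier M A. \<forall>y\<in>carrier M A. x + y \<in> carrier M A) \<and>
        (\<forall>x\<in>carrier M A. - x \<in> carrier M A) \<and>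
        (\<forall>c. \<forall>x\<in>carrier M A. msmult M c x \<in> carrier M A) \<and>
        (\<forall>c. \<forall>x\<in>carrier M A. \<forall>y\<in>carrier M A. msmult M c (x + y) = msmult M c x + msmult M c y) \<and>
        (\<forall>c d. \<forall>x\<in>carrier M A. msmult M (c + d) x = msmult M c x + msmult M d x) \<and>
        (\<forall>c d. \<forall>x\<in>carrier M A. msmult M (c * d) x = msmult M c (msmult M d x)) \<and>
        (\<forall>x\<in>carrier M A. msmult M 1 x = x)) \<and>
     (\<forall>A\<in>kOb C. \<forall>A'\<in>kOb C. \<forall>f\<in>kHom C A A'.
        (\<forall>x\<in>carrier M A'. act M f x \<in> carrier M A) \<and>
        (\<forall>x\<in>carrier M A'. \<forall>y\<in>carrier M A'. act M f (x + y) = act M f x + act M f y) \<and>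
        (\<forall>c. \<forall>x\<in>carrier M A'. act M f (msmult M c x) = msmult M c (act M f x))) \<and>
     (\<forall>A\<in>kOb C. \<forall>x\<in>carrier M A. act M (kid C A) x = x) \<and>
     (\<forall>A\<in>kOb C. \<forall>A'\<in>kOb C. \<forall>A''\<in>kOb C. \<forall>f\<in>kHom C A A'. \<forall>g\<in>kHom C A' A''.
        \<forall>x\<in>carrier M A''. act M (kcomp C g f) x = act M f (act M g x)) \<and>
     (\<forall>A\<in>kOb C. \<forall>A'\<in>kOb C. \<forall>f\<in>kHom C A A'. \<forall>g\<in>kHom C A A'. \<forall>c. \<forall>x\<in>carrier M A'.
        act M (f + g) x = act M f x + act M g x \<and>
        act M (ksmult C c f) x = msmult M c (act M f x))"

definition is_kmod_hom ::
  "('o, 'h::ab_group_add, 'k::comm_ring_1) klcat \<Rightarrow> ('o, 'h, 'm::ab_group_add, 'k) kmod \<Rightarrow>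
   ('o, 'h, 'n::ab_group_add, 'k) kmod \<Rightarrow> ('o \<Rightarrow> 'm \<Rightarrow> 'n) \<Rightarrow> bool" where
  "is_kmod_hom C M N h \<longleftrightarrow>
     (\<forall>A\<in>kOb C.
        (\<forall>x\<in>carrier M A. h A x \<in> carrier N A) \<and>
        (\<forall>x\<in>carrier M A. \<forall>y\<in>carrier M A. h A (x + y) = h A x + h A y) \<and>
        (\<forall>c. \<forall>x\<in>carrier M A. h A (msmult M c x) = msmult N c (h A x))) \<and>
     (\<forall>A\<in>kOb C. \<forall>A'\<in>kOb C. \<forall>f\<in>kHom C A A'. \<forall>x\<in>carrier M A'.
        h A (act M f x) = act N f (h A' x))"

text \<open>For u : V \<rightarrow> U and a module M over A(U), (M \<otimes>_u A(V))(B) is the coend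
  \<integral>^A M(A) \<otimes>_k A(V)(B, u^* A).  We describe it as the free k-module on triples
  (A, m, f) with m \<in> M(A), f : B \<rightarrow> u^*A (finitely supported functions to k),
  modulo the k-submodule generated by bilinearity and balancing relations.\<close>

definition tens_triples ::
  "('u, 'f, 'o, 'h, 'k) prestack \<Rightarrow> 'f \<Rightarrow> 'u \<Rightarrow> 'u \<Rightarrow> ('o, 'h, 'm, 'k) kmod \<Rightarrow> 'o \<Rightarrow>
   ('o \<times> 'm \<times> 'h) set" where
  "tens_triples P u U V M B =
     {(A, m, f). A \<in> kOb (pcat P U) \<and> m \<in> carrier M A \<and> f \<in> kHom (pcat P V) B (pobj P u A)}"

definition tens_fsums ::
  "('u, 'f, 'o, 'h, 'k::zero) prestack \<Rightarrow> 'f \<Rightarrow> 'u \<Rightarrow> 'u \<Rightarrow> ('o, 'h, 'm, 'k) kmod \<Rightarrow> 'o \<Rightarrow>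
   ('o \<times> 'm \<times> 'h \<Rightarrow> 'k) set" where
  "tens_fsums P u U V M B =
     {s. finite {t. s t \<noteq> 0} \<and> {t. s t \<noteq> 0} \<subseteq> tens_triples P u U V M B}"

definition fdelta :: "'a \<Rightarrow> 'a \<Rightarrow> 'k::zero_neq_one" where
  "fdelta t = (\<lambda>x. if x = t then 1 else 0)"

definition tens_gens ::
  "('u, 'f, 'o, 'h::ab_group_add, 'k::comm_ring_1) prestack \<Rightarrow> 'f \<Rightarrow> 'u \<Rightarrow> 'u \<Rightarrow>
   ('o, 'h, 'm::ab_group_add, 'k) kmod \<Rightarrow> 'o \<Rightarrow> ('o \<times> 'm \<times> 'h \<Rightarrow> 'k) set" where
  "tens_gens P u U V M B =
     {(\<lambda>x. fdelta (A, m + m', f) x - fdelta (A, m, f) x - fdelta (A, m', f) x) | A m m' f.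
        A \<in> kOb (pcat P U) \<and> m \<in> carrier M A \<and> m' \<in> carrier M A \<and>
        f \<in> kHom (pcat P V) B (pobj P u A)} \<union>
     {(\<lambda>x. fdelta (A, m, f + f') x - fdelta (A, m, f) x - fdelta (A, m, f') x) | A m f f'.
        A \<in> kOb (pcat P U) \<and> m \<in> carrier M A \<and>
        f \<in> kHom (pcat P V) B (pobj P u A) \<and> f' \<in> kHom (pcat P V) B (pobj P u A)} \<union>
     {(\<lambda>x. fdelta (A, msmult M c m, f) x - c * fdelta (A, m, f) x) | A m f c.
        A \<in> kOb (pcat P U) \<and> m \<in> carrier M A \<and> f \<in> kHom (pcat P V) B (pobj P u A)} \<union>
     {(\<lambda>x. fdelta (A, m, ksmult (pcat P V) c f) x - c * fdelta (A, m, f) x) | A m f c.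
        A \<in> kOb (pcat P U) \<and> m \<in> carrier M A \<and> f \<in> kHom (pcat P V) B (pobj P u A)} \<union>
     {(\<lambda>x. fdelta (A, act M a m, f) x - fdelta (A', m, kcomp (pcat P V) (pmor P u a) f) x)
        | A A' a m f.
        A \<in> kOb (pcat P U) \<and> A' \<in> kOb (pcat P U) \<and> a \<in> kHom (pcat P U) A A' \<and>
        m \<in> carrier M A' \<and> f \<in> kHom (pcat P V) B (pobj P u A)}"

inductive_set kspan :: "('a \<Rightarrow> 'k::comm_ring_1) set \<Rightarrow> ('a \<Rightarrow> 'k) set" for G where
  kspan_zero: "(\<lambda>x. 0) \<in> kspan G"
| kspan_gen: "g \<in> G \<Longrightarrow> g \<in> kspan G"
| kspan_add: "s \<in> kspan G \<Longrightarrow> r \<in> kspan G \<Longrightarrow> (\<lambda>x. s x + r x) \<in> kspan G"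
| kspan_smult: "s \<in> kspan G \<Longrightarrow> (\<lambda>x. c * s x) \<in> kspan G"

definition tens_rel ::
  "('u, 'f, 'o, 'h::ab_group_add, 'k::comm_ring_1) prestack \<Rightarrow> 'f \<Rightarrow> 'u \<Rightarrow> 'u \<Rightarrow>
   ('o, 'h, 'm::ab_group_add, 'k) kmod \<Rightarrow> 'o \<Rightarrow> ('o \<times> 'm \<times> 'h \<Rightarrow> 'k) set" where
  "tens_rel P u U V M B = kspan (tens_gens P u U V M B)"

text \<open>Push-forward of formal sums along a module morphism h (this is h \<otimes>_u A(V)).\<close>

definition tens_push :: "('o \<Rightarrow> 'm \<Rightarrow> 'n) \<Rightarrow> ('o \<times> 'm \<times> 'h \<Rightarrow> 'k::comm_ring_1) \<Rightarrow> ('o \<times> 'n \<times> 'h \<Rightarrow> 'k)" where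
  "tens_push h s = (\<lambda>(A, n, f). \<Sum>m\<in>{m. s (A, m, f) \<noteq> 0 \<and> h A m = n}. s (A, m, f))"

definition exact_at ::
  "('o, 'h, 'k) klcat \<Rightarrow> ('o, 'h, 'm, 'k) kmod \<Rightarrow> ('o, 'h, 'm::zero, 'k) kmod \<Rightarrow>
   ('o \<Rightarrow> 'm \<Rightarrow> 'm) \<Rightarrow> ('o \<Rightarrow> 'm \<Rightarrow> 'm) \<Rightarrow> bool" where
  "exact_at C Pm Qm h g \<longleftrightarrow>
     (\<forall>A\<in>kOb C. h A ` carrier Pm A = {q \<in> carrier Qm A. g A q = 0})"

text \<open>- \<otimes>_u A(V) is exact: it carries every sequence P -h-> Q -g-> S of A(U)-modules
  which is exact at Q to a sequence exact at Q \<otimes>_u A(V) (checked at every object B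
  of A(V)).  Modules are taken with elements in the type 'm given by the first argument.\<close>

definition is_geometric ::
  "('m::ab_group_add) itself \<Rightarrow> ('u, 'f) smallcat \<Rightarrow>
   ('u, 'f, 'o, 'h::ab_group_add, 'k::comm_ring_1) prestack \<Rightarrow> bool" where
  "is_geometric TYPE('m) UC P \<longleftrightarrow>
     (\<forall>U\<in>cOb UC. \<forall>V\<in>cOb UC. \<forall>u\<in>cHom UC V U.
        \<forall>(Pm :: ('o, 'h, 'm, 'k) kmod) Qm Sm h g.
          is_kmod (pcat P U) Pm \<and> is_kmod (pcat P U) Qm \<and> is_kmod (pcat P U) Sm \<and>
          is_kmod_hom (pcat P U) Pm Qm h \<and> is_kmod_hom (pcat P U) Qm Sm g \<and>
          exact_at (pcat P U) Pm Qm h g \<longrightarrow>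
          (\<forall>B\<in>kOb (pcat P V). \<forall>s\<in>tens_fsums P u U V Qm B.
             tens_push g s \<in> tens_rel P u U V Sm B \<longrightarrow>
             (\<exists>t\<in>tens_fsums P u U V Pm B.
                (\<lambda>x. tens_push h t x - s x) \<in> tens_rel P u U V Qm B)))"

text \<open>M \<in> Qch(A): modules M_U = qmod M U over A(U) together with, for u : V \<rightarrow> U, the
  A(U)-linear map qpsi M u A : M_U(A) \<rightarrow> M_V(u^* A) (the adjunct of
  \<phi>_u : M_U \<otimes>_u A(V) \<rightarrow> M_V, so that \<phi>_u(m \<otimes> f) = M_V(f)(qpsi M u A m)); \<phi>_u is required
  to be an isomorphism and to be compatible with the twists c.\<close>

record ('u, 'f, 'o, 'h, 'm, 'k) qmodule =
  qcar :: "'u \<Rightarrow> 'o \<Rightarrow> 'm set"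
  qact :: "'u \<Rightarrow> 'h \<Rightarrow> 'm \<Rightarrow> 'm"
  qsmult :: "'k \<Rightarrow> 'm \<Rightarrow> 'm"
  qpsi :: "'f \<Rightarrow> 'o \<Rightarrow> 'm \<Rightarrow> 'm"

definition qmod :: "('u, 'f, 'o, 'h, 'm, 'k) qmodule \<Rightarrow> 'u \<Rightarrow> ('o, 'h, 'm, 'k) kmod" where
  "qmod M U = \<lparr>carrier = qcar M U, act = qact M U, msmult = qsmult M\<rparr>"

text \<open>\<phi>_u applied to a formal sum \<Sum> s(A,m,f) (m \<otimes> f).\<close>

definition phi_eval ::
  "('u, 'f, 'o, 'h, 'm::ab_group_add, 'k::zero) qmodule \<Rightarrow> 'f \<Rightarrow> 'u \<Rightarrow>
   ('o \<times> 'm \<times> 'h \<Rightarrow> 'k) \<Rightarrow> 'm" where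
  "phi_eval M u V s =
     (\<Sum>t\<in>{t. s t \<noteq> 0}. case t of (A, m, f) \<Rightarrow> qsmult M (s t) (qact M V f (qpsi M u A m)))"

definition is_qch ::
  "('u, 'f) smallcat \<Rightarrow> ('u, 'f, 'o, 'h::ab_group_add, 'k::comm_ring_1) prestack \<Rightarrow>
   ('u, 'f, 'o, 'h, 'm::ab_group_add, 'k) qmodule \<Rightarrow> bool" where
  "is_qch UC P M \<longleftrightarrow>
     (\<forall>U\<in>cOb UC. is_kmod (pcat P U) (qmod M U)) \<and>
     (\<forall>U\<in>cOb UC. \<forall>V\<in>cOb UC. \<forall>u\<in>cHom UC V U.
        \<comment> \<open>qpsi M u is a morphism M_U \<rightarrow> M_V \<circ> u^* of A(U)-modules\<close>
        (\<forall>A\<in>kOb (pcat P U).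
           (\<forall>x\<in>qcar M U A. qpsi M u A x \<in> qcar M V (pobj P u A)) \<and>
           (\<forall>x\<in>qcar M U A. \<forall>y\<in>qcar M U A. qpsi M u A (x + y) = qpsi M u A x + qpsi M u A y) \<and>
           (\<forall>c. \<forall>x\<in>qcar M U A. qpsi M u A (qsmult M c x) = qsmult M c (qpsi M u A x))) \<and>
        (\<forall>A\<in>kOb (pcat P U). \<forall>A'\<in>kOb (pcat P U). \<forall>a\<in>kHom (pcat P U) A A'. \<forall>x\<in>qcar M U A'.
           qpsi M u A (qact M U a x) = qact M V (pmor P u a) (qpsi M u A' x)) \<and>
        \<comment> \<open>\<phi>_u : M_U \<otimes>_u A(V) \<rightarrow> M_V is bijective at every object B\<close>
        (\<forall>B\<in>kOb (pcat P V).
           (\<forall>y\<in>qcar M V B. \<exists>s\<in>tens_fsums P u U V (qmod M U) B. phi_eval M u V s = y) \<and>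
           (\<forall>s\<in>tens_fsums P u U V (qmod M U) B.
              phi_eval M u V s = 0 \<longrightarrow> s \<in> tens_rel P u U V (qmod M U) B))) \<and>
     \<comment> \<open>compatibility with the twists c^{u,v}\<close>
     (\<forall>U\<in>cOb UC. \<forall>V\<in>cOb UC. \<forall>W\<in>cOb UC. \<forall>u\<in>cHom UC V U. \<forall>v\<in>cHom UC W V.
        \<forall>A\<in>kOb (pcat P U). \<forall>x\<in>qcar M U A.
          qpsi M v (pobj P u A) (qpsi M u A x) =
          qact M W (pc P u v A) (qpsi M (ccomp UC u v) A x))"

definition cat_mors :: "('u, 'f) smallcat \<Rightarrow> ('u \<times> 'u \<times> 'f) set" where
  "cat_mors UC = {(V, U, f). V \<in> cOb UC \<and> U \<in> cOb UC \<and> f \<in> cHom UC V U}"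

definition prestack_mors ::
  "('u, 'f) smallcat \<Rightarrow> ('u, 'f, 'o, 'h, 'k) prestack \<Rightarrow> ('u \<times> 'o \<times> 'o \<times> 'h) set" where
  "prestack_mors UC P = {(U, A, A', f). U \<in> cOb UC \<and> A \<in> kOb (pcat P U) \<and>
      A' \<in> kOb (pcat P U) \<and> f \<in> kHom (pcat P U) A A'}"

text \<open>Elements of a family X_U(A) (disjoint union over U and A).\<close>

definition fam_elems ::
  "('u, 'f) smallcat \<Rightarrow> ('u, 'f, 'o, 'h, 'k) prestack \<Rightarrow> ('u \<Rightarrow> 'o \<Rightarrow> 'm set) \<Rightarrow> ('u \<times> 'o \<times> 'm) set" where
  "fam_elems UC P X = {(U, A, x). U \<in> cOb UC \<and> A \<in> kOb (pcat P U) \<and> x \<in> X U A}"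

end

theory Submission
  imports Defs
begin

text \<open>Starting from \<open>X\<close>, enlarge a subfamily \<open>S \<subseteq> M\<close> in \<open>\<omega>\<close> steps. A step adds what is needed for
  \<open>S\<close> to become a quasi-coherent submodule: the results of the module operations and of the maps
  \<open>\<psi>\<^sub>u\<close> applied to elements of \<open>S\<close>; for each \<open>y \<in> S\<close> the finitely many module elements occurring
  in a preimage of \<open>y\<close> under \<open>\<phi>\<^sub>u\<close> (surjectivity); and for each formal sum over \<open>S\<close> which is a
  relation of \<open>M \<otimes>\<^sub>u \<A>(V)\<close>, the finitely many elements used by that relation (injectivity). Each
  request needs finitely many elements and there are at most \<open>\<kappa>\<close> requests, so every stage has
  at most \<open>\<kappa>\<close> elements. Every request concerns finitely many elements of the union \<open>N\<close>, hence is
  met at a later stage, so \<open>N\<close> is quasi-coherent.\<close>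

unbundle cardinal_syntax

section \<open>Cardinal bounds\<close>

lemma ordLeq_infinite_finite: "finite A \<Longrightarrow> infinite K \<Longrightarrow> |A| \<le>o |K|"
  by (meson card_of_Well_order card_of_ordLeq_finite ordLeq_total)

lemma ordLeq_subset: "A \<subseteq> B \<Longrightarrow> |B| \<le>o |K| \<Longrightarrow> |A| \<le>o |K|"
  using card_of_mono1 ordLeq_transitive by blast

lemma ordLeq_image_subset: "B \<subseteq> f ` A \<Longrightarrow> |A| \<le>o |K| \<Longrightarrow> |B| \<le>o |K|"
  using card_of_image ordLeq_subset ordLeq_transitive by blast

lemma ordLeq_infinite_Times: "infinite K \<Longrightarrow> |A| \<le>o |K| \<Longrightarrow> |B| \<le>o |K| \<Longrightarrow> |A \<times> B| \<le>o |K|"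
  using card_of_Times_ordLeq_infinite_Field[of "|K|" A B] card_of_Card_order[of K]
  by (simp add: Field_card_of)

lemma ordLeq_infinite_Un: "infinite K \<Longrightarrow> |A| \<le>o |K| \<Longrightarrow> |B| \<le>o |K| \<Longrightarrow> |A \<union> B| \<le>o |K|"
  using card_of_Un_ordLeq_infinite_Field[of "|K|" A B] card_of_Card_order[of K]
  by (simp add: Field_card_of)

lemma ordLeq_infinite_lists:
  assumes K: "infinite K" and A: "|A| \<le>o |K|"
  shows "|{xs. set xs \<subseteq> A}| \<le>o |K|"
proof -
  have len: "|{xs. set xs \<subseteq> A \<and> length xs = n}| \<le>o |K|" for n
  proof (induction n)
    case 0
    show ?case by (rule ordLeq_infinite_finite[OF _ K]) simp
  next
    case (Suc n)
    have "{xs. set xs \<subseteq> A \<and> length xs = Suc n} \<subseteq>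
          (\<lambda>(a, xs). a # xs) ` (A \<times> {xs. set xs \<subseteq> A \<and> length xs = n})"
      by (auto simp: length_Suc_conv)
    then show ?case using ordLeq_image_subset ordLeq_infinite_Times[OF K A Suc.IH] by blast
  qed
  have "{xs. set xs \<subseteq> A} = (\<Union>n. {xs. set xs \<subseteq> A \<and> length xs = n})" by auto
  then show ?thesis
    using card_of_UNION_ordLeq_infinite[OF K] len K infinite_iff_card_of_nat by (metis (no_types, lifting))
qed

lemma small_witness_set:
  assumes K: "infinite K" and I: "|I| \<le>o |K|"
    and wit: "\<forall>i\<in>I. \<exists>F. finite F \<and> F \<subseteq> T \<and> Q i F"
  shows "\<exists>G\<subseteq>T. |G| \<le>o |K| \<and> (\<forall>i\<in>I. \<exists>F\<subseteq>G. Q i F)"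
proof -
  from wit obtain F where F: "\<forall>i\<in>I. finite (F i) \<and> F i \<subseteq> T \<and> Q i (F i)"
    by metis
  have "|\<Union>i\<in>I. F i| \<le>o |K|"
    using F by (intro card_of_UNION_ordLeq_infinite[OF K I] ballI ordLeq_infinite_finite[OF _ K]) blast
  with F show ?thesis by (intro exI[of _ "\<Union>i\<in>I. F i"]) blast
qed

lemma finite_subset_incseq_Union:
  fixes C :: "nat \<Rightarrow> 'a set"
  assumes "\<And>n. C n \<subseteq> C (Suc n)" "finite F" "F \<subseteq> (\<Union>n. C n)"
  obtains n where "F \<subseteq> C n"
proof -
  have mono: "m \<le> n \<Longrightarrow> C m \<subseteq> C n" for m n
    using lift_Suc_mono_le[of C, OF assms(1)] by blast
  have "subset.chain UNIV (range C)"
    unfolding subset_chain_def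
  proof (intro conjI ballI)
    fix X Y assume "X \<in> range C" "Y \<in> range C"
    then obtain m n where "X = C m" "Y = C n" by blast
    then show "X \<subseteq> Y \<or> Y \<subseteq> X" using mono nat_le_linear by metis
  qed simp
  with assms obtain B where "B \<in> range C" "F \<subseteq> B"
    by (elim finite_subset_Union_chain) auto
  then show thesis using that by blast
qed

section \<open>Formal sums in \<open>M \<otimes>\<^sub>u \<A>(V)\<close>\<close>

lemma kspan_mono: "s \<in> kspan G \<Longrightarrow> G \<subseteq> H \<Longrightarrow> s \<in> kspan H"
  by (induction rule: kspan.induct) (auto intro: kspan.intros)

lemma kspan_sum:
  assumes "finite D" "\<And>t. t \<in> D \<Longrightarrow> g t \<in> kspan G"
  shows "(\<lambda>x. \<Sum>t\<in>D. g t x) \<in> kspan G"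
  using assms
proof (induction D rule: finite_induct)
  case empty
  then show ?case by (simp add: kspan.kspan_zero)
next
  case (insert a D)
  then have "(\<lambda>x. g a x + (\<Sum>t\<in>D. g t x)) \<in> kspan G"
    by (intro kspan.kspan_add) auto
  with insert show ?case by simp
qed

lemma kspan_diff:
  assumes "s \<in> kspan G" "r \<in> kspan G"
  shows "(\<lambda>x. s x - r x) \<in> kspan G"
proof -
  have "(\<lambda>x. s x + (-1) * r x) \<in> kspan G"
    using assms by (intro kspan.kspan_add kspan.kspan_smult)
  then show ?thesis by simp
qed

lemma tens_triples_mono:
  "(\<And>A. A \<in> kOb (pcat P U) \<Longrightarrow> carrier M1 A \<subseteq> carrier M2 A) \<Longrightarrow>
   tens_triples P u U V M1 B \<subseteq> tens_triples P u U V M2 B"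
  unfolding tens_triples_def by auto

lemma tens_fsums_mono:
  assumes "\<And>A. A \<in> kOb (pcat P U) \<Longrightarrow> carrier M1 A \<subseteq> carrier M2 A"
  shows "tens_fsums P u U V M1 B \<subseteq> tens_fsums P u U V M2 B"
proof -
  have "tens_triples P u U V M1 B \<subseteq> tens_triples P u U V M2 B"
    using assms by (rule tens_triples_mono)
  then show ?thesis unfolding tens_fsums_def by blast
qed

lemma tens_rel_mono:
  assumes "act M1 = act M2" "msmult M1 = msmult M2"
    and "\<And>A. A \<in> kOb (pcat P U) \<Longrightarrow> carrier M1 A \<subseteq> carrier M2 A"
  shows "tens_rel P u U V M1 B \<subseteq> tens_rel P u U V M2 B"
proof -
  have "tens_gens P u U V M1 B \<subseteq> tens_gens P u U V M2 B"
    unfolding tens_gens_def assms(1,2)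
    by (intro Un_mono Collect_mono impI) (blast intro: assms(3)[THEN subsetD])+
  then show ?thesis unfolding tens_rel_def using kspan_mono by blast
qed

lemma tens_gens_finite_support:
  assumes "g \<in> tens_gens P u U V Mm B"
  obtains F where "finite F" "F \<subseteq> Sigma (kOb (pcat P U)) (carrier Mm)"
    "g \<in> tens_gens P u U V (Mm\<lparr>carrier := \<lambda>A. F `` {A}\<rparr>) B"
  using assms[unfolded tens_gens_def]
  apply (elim UnE CollectE exE conjE; hypsubst)
  subgoal for A m m' f
    by (rule that[of "{(A, m), (A, m')}"]) (simp_all add: tens_gens_def, rule disjI1, blast)
  subgoal for A m f f' by (rule that[of "{(A, m)}"]) (auto simp: tens_gens_def)
  subgoal for A m f c by (rule that[of "{(A, m)}"]) (auto simp: tens_gens_def)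
  subgoal for A m f c by (rule that[of "{(A, m)}"]) (auto simp: tens_gens_def)
  subgoal for A A' a m f by (rule that[of "{(A', m)}"]) (auto simp: tens_gens_def)
  done

lemma tens_rel_finite_support:
  assumes "s \<in> tens_rel P u U V Mm B"
  obtains F where "finite F" "F \<subseteq> Sigma (kOb (pcat P U)) (carrier Mm)"
    "s \<in> tens_rel P u U V (Mm\<lparr>carrier := \<lambda>A. F `` {A}\<rparr>) B"
proof -
  let ?gens = "\<lambda>F. tens_gens P u U V (Mm\<lparr>carrier := \<lambda>A. F `` {A}\<rparr>) B"
  let ?small = "\<lambda>F. finite F \<and> F \<subseteq> Sigma (kOb (pcat P U)) (carrier Mm)"
  have span_mono: "kspan (?gens F) \<subseteq> kspan (?gens G)" if "F \<subseteq> G" for F G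
  proof -
    have "tens_rel P u U V (Mm\<lparr>carrier := \<lambda>A. F `` {A}\<rparr>) B \<subseteq>
          tens_rel P u U V (Mm\<lparr>carrier := \<lambda>A. G `` {A}\<rparr>) B"
      using that by (intro tens_rel_mono) auto
    then show ?thesis by (simp only: tens_rel_def)
  qed
  have "\<exists>F. ?small F \<and> s \<in> kspan (?gens F)"
    using assms unfolding tens_rel_def
  proof (induction rule: kspan.induct)
    case kspan_zero
    have "?small {}" "(\<lambda>x. 0) \<in> kspan (?gens {})" by (simp_all add: kspan.kspan_zero)
    then show ?case by blast
  next
    case (kspan_gen g)
    then obtain F where F: "?small F" "g \<in> ?gens F"
      by (metis tens_gens_finite_support)
    from F(2) have "g \<in> kspan (?gens F)" by (rule kspan.kspan_gen)
    with F(1) show ?case by blast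
  next
    case (kspan_add s r)
    then obtain F G where F: "?small F" "s \<in> kspan (?gens F)" and G: "?small G" "r \<in> kspan (?gens G)"
      by blast
    have "s \<in> kspan (?gens (F \<union> G))" "r \<in> kspan (?gens (F \<union> G))"
      using F(2) G(2) span_mono[of F "F \<union> G"] span_mono[of G "F \<union> G"] by blast+
    then have "(\<lambda>x. s x + r x) \<in> kspan (?gens (F \<union> G))" by (rule kspan.kspan_add)
    moreover have "?small (F \<union> G)" using F(1) G(1) by blast
    ultimately show ?case by blast
  next
    case (kspan_smult s c)
    then obtain F where F: "?small F" "s \<in> kspan (?gens F)" by blast
    from F(2) have "(\<lambda>x. c * s x) \<in> kspan (?gens F)" by (rule kspan.kspan_smult)
    with F(1) show ?case by blast
  qed
  with that show thesis unfolding tens_rel_def by blast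
qed

lemma tens_gens_smultI:
  assumes "A \<in> kOb (pcat P U)" "m \<in> carrier Mm A" "f \<in> kHom (pcat P V) B (pobj P u A)"
  shows "(\<lambda>x. fdelta (A, msmult Mm c m, f) x - c * fdelta (A, m, f) x) \<in> tens_gens P u U V Mm B"
  unfolding tens_gens_def by (rule UnI1, rule UnI1, rule UnI2) (use assms in blast)

definition formal_sum :: "'a list \<Rightarrow> 'a \<Rightarrow> 'k::comm_ring_1" where
  "formal_sum xs = (\<lambda>x. \<Sum>y\<leftarrow>xs. fdelta y x)"

text \<open>Moving each coefficient into the module element (\<open>c (m \<otimes> f) = c m \<otimes> f\<close>) leaves only
  coefficients one; such sums are indexed by lists of triples, so their number does not depend
  on the size of \<open>k\<close>.\<close>
lemma tens_fsums_unit_coefficients: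
  assumes Mm: "is_kmod (pcat P U) Mm" and s: "s \<in> tens_fsums P u U V Mm B"
  obtains xs where "set xs \<subseteq> tens_triples P u U V Mm B"
    "(\<lambda>x. formal_sum xs x - s x) \<in> tens_rel P u U V Mm B"
proof -
  define D where "D = {t. s t \<noteq> 0}"
  have D: "finite D" "D \<subseteq> tens_triples P u U V Mm B"
    using s unfolding tens_fsums_def D_def by blast+
  define scale where "scale = (\<lambda>(A, m, f). (A, msmult Mm (s (A, m, f)) m, f))"
  obtain ts where ts: "distinct ts" "set ts = D" using finite_distinct_list[OF D(1)] by blast
  show thesis
  proof
    show "set (map scale ts) \<subseteq> tens_triples P u U V Mm B"
      using D(2) Mm ts(2) by (auto simp: scale_def tens_triples_def is_kmod_def)
    have gen: "(\<lambda>x. fdelta (scale t) x - s t * fdelta t x) \<in> tens_gens P u U V Mm B" if "t \<in> D" for t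
      using that D(2) by (auto simp: scale_def tens_triples_def intro: tens_gens_smultI)
    have "(\<lambda>x. \<Sum>t\<in>D. fdelta (scale t) x - s t * fdelta t x) \<in> tens_rel P u U V Mm B"
      unfolding tens_rel_def by (rule kspan_sum[OF D(1)]) (rule kspan.kspan_gen[OF gen])
    moreover have "(\<Sum>t\<in>D. fdelta (scale t) x - s t * fdelta t x) = formal_sum (map scale ts) x - s x" for x
    proof -
      have "(\<Sum>t\<in>D. fdelta (scale t) x) = formal_sum (map scale ts) x"
        using ts by (simp add: formal_sum_def sum_list_distinct_conv_sum_set o_def)
      moreover have "(\<Sum>t\<in>D. s t * fdelta t x) = (\<Sum>t\<in>D. if x = t then s t else 0)"
        by (rule sum.cong) (simp_all add: fdelta_def)
      then have "(\<Sum>t\<in>D. s t * fdelta t x) = s x"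
        using D(1) by (simp add: D_def)
      ultimately show ?thesis by (simp add: sum_subtractf)
    qed
    ultimately show "(\<lambda>x. formal_sum (map scale ts) x - s x) \<in> tens_rel P u U V Mm B" by simp
  qed
qed

section \<open>Subfamilies of quasi-coherent modules\<close>

lemma is_kmod_restrict:
  assumes C: "is_klcat C" and Mm: "is_kmod C Mm"
    and sub: "\<And>A. A \<in> kOb C \<Longrightarrow> N A \<subseteq> carrier Mm A"
    and zero: "\<And>A. A \<in> kOb C \<Longrightarrow> 0 \<in> N A"
    and add: "\<And>A x y. A \<in> kOb C \<Longrightarrow> x \<in> N A \<Longrightarrow> y \<in> N A \<Longrightarrow> x + y \<in> N A"
    and neg: "\<And>A x. A \<in> kOb C \<Longrightarrow> x \<in> N A \<Longrightarrow> - x \<in> N A"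
    and act: "\<And>A A' f x. A \<in> kOb C \<Longrightarrow> A' \<in> kOb C \<Longrightarrow> f \<in> kHom C A A' \<Longrightarrow> x \<in> N A' \<Longrightarrow>
              act Mm f x \<in> N A"
  shows "is_kmod C (Mm\<lparr>carrier := N\<rparr>)"
proof -
  have smult: "msmult Mm c x \<in> N A" if "A \<in> kOb C" "x \<in> N A" for A c x
  proof -
    \<comment> \<open>scalars act through the endomorphism \<open>c \<cdot> id\<close>\<close>
    have x: "x \<in> carrier Mm A" using sub that by blast
    have id: "kid C A \<in> kHom C A A" using C that(1) by (simp add: is_klcat_def)
    then have "ksmult C c (kid C A) \<in> kHom C A A" using C that(1) by (simp add: is_klcat_def)
    then have "act Mm (ksmult C c (kid C A)) x \<in> N A" using act that by blast
    moreover have "act Mm (ksmult C c (kid C A)) x = msmult Mm c (act Mm (kid C A) x)"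
      using Mm id that(1) x by (simp add: is_kmod_def)
    moreover have "act Mm (kid C A) x = x" using Mm that(1) x by (simp add: is_kmod_def)
    ultimately show ?thesis by simp
  qed
  have "x \<in> carrier Mm A" if "A \<in> kOb C" "x \<in> N A" for A x using sub that by blast
  then show ?thesis
    using Mm unfolding is_kmod_def
    by (simp add: zero add neg act smult)
qed

lemma phi_eval_update_qcar [simp]: "phi_eval (M\<lparr>qcar := N\<rparr>) = phi_eval M"
  by (simp add: phi_eval_def fun_eq_iff)

lemma qmod_update_qcar [simp]: "qmod (M\<lparr>qcar := N\<rparr>) U = (qmod M U)\<lparr>carrier := N U\<rparr>"
  by (simp add: qmod_def)

lemma qmod_simps [simp]:
  "carrier (qmod M U) = qcar M U" "act (qmod M U) = qact M U" "msmult (qmod M U) = qsmult M"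
  by (simp_all add: qmod_def)

lemma is_qch_subfamily:
  assumes M: "is_qch UC P M"
    and sub: "\<And>U A. U \<in> cOb UC \<Longrightarrow> A \<in> kOb (pcat P U) \<Longrightarrow> N U A \<subseteq> qcar M U A"
    and kmod: "\<And>U. U \<in> cOb UC \<Longrightarrow> is_kmod (pcat P U) ((qmod M U)\<lparr>carrier := N U\<rparr>)"
    and psi: "\<And>U V u A x. U \<in> cOb UC \<Longrightarrow> V \<in> cOb UC \<Longrightarrow> u \<in> cHom UC V U \<Longrightarrow>
        A \<in> kOb (pcat P U) \<Longrightarrow> x \<in> N U A \<Longrightarrow> qpsi M u A x \<in> N V (pobj P u A)"
    and surj: "\<And>U V u B y. U \<in> cOb UC \<Longrightarrow> V \<in> cOb UC \<Longrightarrow> u \<in> cHom UC V U \<Longrightarrow>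
        B \<in> kOb (pcat P V) \<Longrightarrow> y \<in> N V B \<Longrightarrow>
        \<exists>s\<in>tens_fsums P u U V ((qmod M U)\<lparr>carrier := N U\<rparr>) B. phi_eval M u V s = y"
    and inj: "\<And>U V u B s. U \<in> cOb UC \<Longrightarrow> V \<in> cOb UC \<Longrightarrow> u \<in> cHom UC V U \<Longrightarrow>
        B \<in> kOb (pcat P V) \<Longrightarrow> s \<in> tens_fsums P u U V ((qmod M U)\<lparr>carrier := N U\<rparr>) B \<Longrightarrow>
        phi_eval M u V s = 0 \<Longrightarrow> s \<in> tens_rel P u U V ((qmod M U)\<lparr>carrier := N U\<rparr>) B"
  shows "is_qch UC P (M\<lparr>qcar := N\<rparr>)"
proof -
  have "x \<in> qcar M U A" if "U \<in> cOb UC" "A \<in> kOb (pcat P U)" "x \<in> N U A" for U A x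
    using sub that by blast
  with M show ?thesis
    unfolding is_qch_def by (simp add: kmod psi surj inj)
qed

definition fam_of :: "('u \<times> 'o \<times> 'm) set \<Rightarrow> 'u \<Rightarrow> 'o \<Rightarrow> 'm set" where
  "fam_of S U A = {x. (U, A, x) \<in> S}"

lemma fam_of_mono: "S \<subseteq> T \<Longrightarrow> fam_of S U A \<subseteq> fam_of T U A"
  by (auto simp: fam_of_def)

lemma fam_elems_fam_of: "fam_elems UC P (fam_of S) \<subseteq> S"
  by (auto simp: fam_elems_def fam_of_def)

section \<open>Absorbing subfamilies\<close>

locale qch_bound =
  fixes UC :: "('u, 'f) smallcat"
    and P :: "('u, 'f, 'o, 'h::ab_group_add, 'k::comm_ring_1) prestack"
    and M :: "('u, 'f, 'o, 'h, 'm::ab_group_add, 'k) qmodule"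
    and K :: "'c set"
  assumes prestack: "is_prestack UC P"
    and M_qch: "is_qch UC P M"
    and K_infinite: "infinite K"
    and card_cat_mors: "|cat_mors UC| \<le>o |K|"
    and card_prestack_mors: "|prestack_mors UC P| \<le>o |K|"
begin

abbreviation elems :: "('u \<times> 'o \<times> 'm) set" where
  "elems \<equiv> fam_elems UC P (qcar M)"

abbreviation submod :: "('u \<times> 'o \<times> 'm) set \<Rightarrow> 'u \<Rightarrow> ('o, 'h, 'm, 'k) kmod" where
  "submod S U \<equiv> (qmod M U)\<lparr>carrier := fam_of S U\<rparr>"

lemma is_klcat_pcat: "U \<in> cOb UC \<Longrightarrow> is_klcat (pcat P U)"
  using prestack by (simp add: is_prestack_def)

lemma pobj_closed:
  "(V, U, u) \<in> cat_mors UC \<Longrightarrow> A \<in> kOb (pcat P U) \<Longrightarrow> pobj P u A \<in> kOb (pcat P V)"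
  using prestack by (clarsimp simp: is_prestack_def cat_mors_def)

lemma is_kmod_qmod: "U \<in> cOb UC \<Longrightarrow> is_kmod (pcat P U) (qmod M U)"
  using M_qch by (simp add: is_qch_def)

lemma psi_closed: "(V, U, u) \<in> cat_mors UC \<Longrightarrow> A \<in> kOb (pcat P U) \<Longrightarrow>
    x \<in> qcar M U A \<Longrightarrow> qpsi M u A x \<in> qcar M V (pobj P u A)"
  using M_qch by (clarsimp simp: is_qch_def cat_mors_def)

lemma phi_surj: "(V, U, u) \<in> cat_mors UC \<Longrightarrow> B \<in> kOb (pcat P V) \<Longrightarrow> y \<in> qcar M V B \<Longrightarrow>
    \<exists>s\<in>tens_fsums P u U V (qmod M U) B. phi_eval M u V s = y"
  using M_qch by (clarsimp simp: is_qch_def cat_mors_def)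

lemma phi_inj: "(V, U, u) \<in> cat_mors UC \<Longrightarrow> B \<in> kOb (pcat P V) \<Longrightarrow>
    s \<in> tens_fsums P u U V (qmod M U) B \<Longrightarrow> phi_eval M u V s = 0 \<Longrightarrow>
    s \<in> tens_rel P u U V (qmod M U) B"
  using M_qch by (clarsimp simp: is_qch_def cat_mors_def)

lemma identity_in_prestack_mors:
  "U \<in> cOb UC \<Longrightarrow> A \<in> kOb (pcat P U) \<Longrightarrow> (U, A, A, kid (pcat P U) A) \<in> prestack_mors UC P"
  using is_klcat_pcat by (simp add: prestack_mors_def is_klcat_def)

definition operations :: "('u \<times> 'o \<times> 'm) set \<Rightarrow> ('u \<times> 'o \<times> 'm) set" where
  "operations S =
     {(U, A, x + y) | U A x y. (U, A, x) \<in> S \<and> (U, A, y) \<in> S} \<union>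
     {(U, A, - x) | U A x. (U, A, x) \<in> S} \<union>
     {(U, A, 0) | U A. U \<in> cOb UC \<and> A \<in> kOb (pcat P U)} \<union>
     {(U, A, qact M U f x) | U A A' f x. (U, A, A', f) \<in> prestack_mors UC P \<and> (U, A', x) \<in> S} \<union>
     {(V, pobj P u A, qpsi M u A x) | V U u A x. (V, U, u) \<in> cat_mors UC \<and> (U, A, x) \<in> S}"

lemma operations_mono: "S \<subseteq> T \<Longrightarrow> operations S \<subseteq> operations T"
  unfolding operations_def by blast

lemma operations_addI: "(U, A, x) \<in> S \<Longrightarrow> (U, A, y) \<in> S \<Longrightarrow> (U, A, x + y) \<in> operations S"
  unfolding operations_def by blast

lemma operations_negI: "(U, A, x) \<in> S \<Longrightarrow> (U, A, - x) \<in> operations S"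
  unfolding operations_def by blast

lemma operations_zeroI: "U \<in> cOb UC \<Longrightarrow> A \<in> kOb (pcat P U) \<Longrightarrow> (U, A, 0) \<in> operations S"
  unfolding operations_def by blast

lemma operations_actI:
  "(U, A, A', f) \<in> prestack_mors UC P \<Longrightarrow> (U, A', x) \<in> S \<Longrightarrow> (U, A, qact M U f x) \<in> operations S"
  unfolding operations_def by blast

lemma operations_psiI:
  "(V, U, u) \<in> cat_mors UC \<Longrightarrow> (U, A, x) \<in> S \<Longrightarrow> (V, pobj P u A, qpsi M u A x) \<in> operations S"
  unfolding operations_def by blast

lemma qcar_zero: "U \<in> cOb UC \<Longrightarrow> A \<in> kOb (pcat P U) \<Longrightarrow> 0 \<in> qcar M U A"
  using is_kmod_qmod by (simp add: is_kmod_def)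

lemma qcar_add:
  "U \<in> cOb UC \<Longrightarrow> A \<in> kOb (pcat P U) \<Longrightarrow> x \<in> qcar M U A \<Longrightarrow> y \<in> qcar M U A \<Longrightarrow>
   x + y \<in> qcar M U A"
  using is_kmod_qmod by (simp add: is_kmod_def)

lemma qcar_neg: "U \<in> cOb UC \<Longrightarrow> A \<in> kOb (pcat P U) \<Longrightarrow> x \<in> qcar M U A \<Longrightarrow> - x \<in> qcar M U A"
  using is_kmod_qmod by (simp add: is_kmod_def)

lemma qcar_act:
  "(U, A, A', f) \<in> prestack_mors UC P \<Longrightarrow> x \<in> qcar M U A' \<Longrightarrow> qact M U f x \<in> qcar M U A"
  using is_kmod_qmod by (auto simp: is_kmod_def prestack_mors_def)

lemma operations_elems:
  assumes S: "S \<subseteq> elems"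
  shows "operations S \<subseteq> elems"
  unfolding operations_def
proof (intro Un_least)
  show "{(U, A, x + y) | U A x y. (U, A, x) \<in> S \<and> (U, A, y) \<in> S} \<subseteq> elems"
    using S by (auto simp: fam_elems_def intro: qcar_add)
  show "{(U, A, - x) | U A x. (U, A, x) \<in> S} \<subseteq> elems"
    using S by (auto simp: fam_elems_def intro: qcar_neg)
  show "{(U, A, 0) | U A. U \<in> cOb UC \<and> A \<in> kOb (pcat P U)} \<subseteq> elems"
    by (auto simp: fam_elems_def intro: qcar_zero)
  show "{(U, A, qact M U f x) | U A A' f x. (U, A, A', f) \<in> prestack_mors UC P \<and> (U, A', x) \<in> S}
      \<subseteq> elems"
    using S by (auto simp: fam_elems_def prestack_mors_def intro: qcar_act)
  show "{(V, pobj P u A, qpsi M u A x) | V U u A x. (V, U, u) \<in> cat_mors UC \<and> (U, A, x) \<in> S}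
      \<subseteq> elems"
    using S by (auto simp: fam_elems_def cat_mors_def intro: pobj_closed psi_closed)
qed

lemma card_operations:
  assumes S: "|S| \<le>o |K|"
  shows "|operations S| \<le>o |K|"
  unfolding operations_def
proof (intro ordLeq_infinite_Un[OF K_infinite])
  note Times = ordLeq_infinite_Times[OF K_infinite]
  show "|{(U, A, x + y) | U A x y. (U, A, x) \<in> S \<and> (U, A, y) \<in> S}| \<le>o |K|"
    by (rule ordLeq_image_subset[OF _ Times[OF S S], of _ "\<lambda>((U, A, x), (_, _, y)). (U, A, x + y)"])
      force
  show "|{(U, A, - x) | U A x. (U, A, x) \<in> S}| \<le>o |K|"
    by (rule ordLeq_image_subset[OF _ S, of _ "\<lambda>(U, A, x). (U, A, - x)"]) force
  show "|{(U, A, 0) | U A. U \<in> cOb UC \<and> A \<in> kOb (pcat P U)}| \<le>o |K|"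
    by (rule ordLeq_image_subset[OF _ card_prestack_mors, of _ "\<lambda>(U, A, _, _). (U, A, 0)"])
      (use identity_in_prestack_mors in force)
  show "|{(U, A, qact M U f x) | U A A' f x. (U, A, A', f) \<in> prestack_mors UC P \<and> (U, A', x) \<in> S}|
      \<le>o |K|"
    by (rule ordLeq_image_subset[OF _ Times[OF card_prestack_mors S],
          of _ "\<lambda>((U, A, _, f), (_, _, x)). (U, A, qact M U f x)"]) force
  show "|{(V, pobj P u A, qpsi M u A x) | V U u A x. (V, U, u) \<in> cat_mors UC \<and> (U, A, x) \<in> S}|
      \<le>o |K|"
    by (rule ordLeq_image_subset[OF _ Times[OF card_cat_mors S],
          of _ "\<lambda>((V, U, u), (_, A, x)). (V, pobj P u A, qpsi M u A x)"]) force
qed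

definition formal_lists :: "('u \<times> 'o \<times> 'm) set \<Rightarrow> (('u \<times> 'u \<times> 'f) \<times> 'o \<times> ('o \<times> 'm \<times> 'h) list) set"
  where "formal_lists S = {((V, U, u), B, xs). (V, U, u) \<in> cat_mors UC \<and> B \<in> kOb (pcat P V) \<and>
      set xs \<subseteq> tens_triples P u U V (submod S U) B}"

lemma formal_lists_mono:
  assumes "S \<subseteq> T"
  shows "formal_lists S \<subseteq> formal_lists T"
proof -
  have "tens_triples P u U V (submod S U) B \<subseteq> tens_triples P u U V (submod T U) B" for u U V B
    using fam_of_mono[OF assms] by (intro tens_triples_mono) simp
  then show ?thesis unfolding formal_lists_def by fast
qed

lemma card_formal_lists:
  assumes S: "|S| \<le>o |K|"
  shows "|formal_lists S| \<le>o |K|"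
proof -
  note Times = ordLeq_infinite_Times[OF K_infinite]
  define objects where "objects = (\<lambda>(_, B, _, _). B) ` prestack_mors UC P"
  define triples where "triples = (\<lambda>((_, A, m), (_, _, _, f)). (A, m, f)) ` (S \<times> prestack_mors UC P)"
  have sub: "formal_lists S \<subseteq> cat_mors UC \<times> objects \<times> {xs. set xs \<subseteq> triples}"
  proof
    fix j assume "j \<in> formal_lists S"
    moreover obtain V U u B xs where j: "j = ((V, U, u), B, xs)" by (cases j) auto
    ultimately have mor: "(V, U, u) \<in> cat_mors UC" and B: "B \<in> kOb (pcat P V)"
      and xs: "set xs \<subseteq> tens_triples P u U V (submod S U) B"
      unfolding formal_lists_def by simp_all
    have V: "V \<in> cOb UC" using mor by (simp add: cat_mors_def)
    have "B \<in> objects"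
      unfolding objects_def using identity_in_prestack_mors[OF V B] by force
    moreover have "t \<in> triples" if "t \<in> set xs" for t
    proof -
      obtain A m f where t: "t = (A, m, f)" by (cases t) auto
      with xs that have A: "A \<in> kOb (pcat P U)" and m: "(U, A, m) \<in> S"
        and f: "f \<in> kHom (pcat P V) B (pobj P u A)"
        by (auto simp: tens_triples_def fam_of_def)
      have "(V, B, pobj P u A, f) \<in> prestack_mors UC P"
        using V B f pobj_closed[OF mor A] by (simp add: prestack_mors_def)
      with m show ?thesis unfolding triples_def t by (rule rev_image_eqI[OF SigmaI]) simp
    qed
    ultimately show "j \<in> cat_mors UC \<times> objects \<times> {xs. set xs \<subseteq> triples}"
      using j mor by auto
  qed
  have objects: "|objects| \<le>o |K|"
    unfolding objects_def by (rule ordLeq_image_subset[OF subset_refl card_prestack_mors])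
  have triples: "|triples| \<le>o |K|"
    unfolding triples_def by (rule ordLeq_image_subset[OF subset_refl Times[OF S card_prestack_mors]])
  show ?thesis
    using ordLeq_subset[OF sub Times[OF card_cat_mors Times[OF objects
          ordLeq_infinite_lists[OF K_infinite triples]]]] .
qed

lemma tens_fsums_submod_mono:
  "S \<subseteq> T \<Longrightarrow> tens_fsums P u U V (submod S U) B \<subseteq> tens_fsums P u U V (submod T U) B"
  by (rule tens_fsums_mono) (simp add: fam_of_mono)

lemma tens_rel_submod_mono:
  "S \<subseteq> T \<Longrightarrow> tens_rel P u U V (submod S U) B \<subseteq> tens_rel P u U V (submod T U) B"
  by (rule tens_rel_mono) (simp_all add: fam_of_mono)

definition absorbs :: "('u \<times> 'o \<times> 'm) set \<Rightarrow> ('u \<times> 'o \<times> 'm) set \<Rightarrow> bool" where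
  "absorbs S S' \<longleftrightarrow> operations S \<subseteq> S' \<and>
     (\<forall>V U u B y. (V, U, u) \<in> cat_mors UC \<longrightarrow> (V, B, y) \<in> S \<longrightarrow>
        (\<exists>s\<in>tens_fsums P u U V (submod S' U) B. phi_eval M u V s = y)) \<and>
     (\<forall>V U u B xs. ((V, U, u), B, xs) \<in> formal_lists S \<longrightarrow>
        formal_sum xs \<in> tens_rel P u U V (qmod M U) B \<longrightarrow>
        formal_sum xs \<in> tens_rel P u U V (submod S' U) B)"

lemma absorbs_operationsD: "absorbs S S' \<Longrightarrow> operations S \<subseteq> S'"
  by (simp add: absorbs_def)

lemma absorbs_preimageD:
  "absorbs S S' \<Longrightarrow> (V, U, u) \<in> cat_mors UC \<Longrightarrow> (V, B, y) \<in> S \<Longrightarrow>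
   \<exists>s\<in>tens_fsums P u U V (submod S' U) B. phi_eval M u V s = y"
  by (simp add: absorbs_def)

lemma absorbs_relationD:
  "absorbs S S' \<Longrightarrow> ((V, U, u), B, xs) \<in> formal_lists S \<Longrightarrow>
   formal_sum xs \<in> tens_rel P u U V (qmod M U) B \<Longrightarrow> formal_sum xs \<in> tens_rel P u U V (submod S' U) B"
  by (simp add: absorbs_def)

lemma absorbs_mono:
  assumes absorbs: "absorbs S S'" and "T \<subseteq> S" "S' \<subseteq> S''"
  shows "absorbs T S''"
  unfolding absorbs_def
proof (intro conjI allI impI)
  show "operations T \<subseteq> S''"
    using absorbs_operationsD[OF absorbs] operations_mono[OF assms(2)] assms(3) by blast
  show "\<exists>s\<in>tens_fsums P u U V (submod S'' U) B. phi_eval M u V s = y"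
    if "(V, U, u) \<in> cat_mors UC" "(V, B, y) \<in> T" for V U u B y
    using absorbs_preimageD[OF absorbs that(1)] that(2) assms(2)
      tens_fsums_submod_mono[OF assms(3)] by blast
  show "formal_sum xs \<in> tens_rel P u U V (submod S'' U) B"
    if "((V, U, u), B, xs) \<in> formal_lists T" "formal_sum xs \<in> tens_rel P u U V (qmod M U) B"
    for V U u B xs
    using absorbs_relationD[OF absorbs _ that(2)] that(1) formal_lists_mono[OF assms(2)]
      tens_rel_submod_mono[OF assms(3)] by blast
qed

lemma preimage_witnesses:
  assumes S: "S \<subseteq> elems" "|S| \<le>o |K|"
  shows "\<exists>G\<subseteq>elems. |G| \<le>o |K| \<and>
    (\<forall>V U u B y. (V, U, u) \<in> cat_mors UC \<longrightarrow> (V, B, y) \<in> S \<longrightarrow>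
       (\<exists>s\<in>tens_fsums P u U V (submod G U) B. phi_eval M u V s = y))"
proof -
  define Q where "Q = (\<lambda>((V, U, u), (V', B, y)) F.
    V' = V \<longrightarrow> (\<exists>s\<in>tens_fsums P u U V (submod F U) B. phi_eval M u V s = y))"
  have witness: "\<exists>F. finite F \<and> F \<subseteq> elems \<and> Q i F" if "i \<in> cat_mors UC \<times> S" for i
  proof -
    obtain V U u V' B y where i: "i = ((V, U, u), (V', B, y))" by (cases i) auto
    show ?thesis
    proof (cases "V' = V")
      case False
      then show ?thesis using i by (auto simp: Q_def)
    next
      case True
      with that i S(1) have mor: "(V, U, u) \<in> cat_mors UC" and "(V, B, y) \<in> elems" by blast+
      then have "B \<in> kOb (pcat P V)" "y \<in> qcar M V B" by (simp_all add: fam_elems_def)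
      then obtain s where s: "s \<in> tens_fsums P u U V (qmod M U) B" "phi_eval M u V s = y"
        using phi_surj[OF mor] by blast
      define F where "F = (\<lambda>(A, m, f). (U, A, m)) ` {t. s t \<noteq> 0}"
      have supp: "{t. s t \<noteq> 0} \<subseteq> tens_triples P u U V (qmod M U) B" "finite {t. s t \<noteq> 0}"
        using s(1) by (simp_all add: tens_fsums_def)
      have U: "U \<in> cOb UC" using mor by (simp add: cat_mors_def)
      have "finite F" using supp(2) by (simp add: F_def)
      moreover have "F \<subseteq> elems"
        using supp(1) U by (force simp: F_def tens_triples_def fam_elems_def)
      moreover have "{t. s t \<noteq> 0} \<subseteq> tens_triples P u U V (submod F U) B"
        using supp(1) by (force simp: F_def tens_triples_def fam_of_def)
      then have "s \<in> tens_fsums P u U V (submod F U) B"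
        using supp(2) by (simp add: tens_fsums_def)
      ultimately show ?thesis using i s(2) by (auto simp: Q_def)
    qed
  qed
  have "\<exists>G\<subseteq>elems. |G| \<le>o |K| \<and> (\<forall>i\<in>cat_mors UC \<times> S. \<exists>F\<subseteq>G. Q i F)"
    by (rule small_witness_set[OF K_infinite ordLeq_infinite_Times[OF K_infinite card_cat_mors S(2)]])
      (use witness in blast)
  then obtain G where G: "G \<subseteq> elems" "|G| \<le>o |K|" "\<forall>i\<in>cat_mors UC \<times> S. \<exists>F\<subseteq>G. Q i F"
    by blast
  show ?thesis
  proof (intro exI[of _ G] conjI allI impI G(1,2))
    fix V U u B y assume "(V, U, u) \<in> cat_mors UC" "(V, B, y) \<in> S"
    with G(3) obtain F where "F \<subseteq> G" "Q ((V, U, u), (V, B, y)) F" by blast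
    then have "F \<subseteq> G" "\<exists>s\<in>tens_fsums P u U V (submod F U) B. phi_eval M u V s = y"
      by (simp_all add: Q_def)
    then show "\<exists>s\<in>tens_fsums P u U V (submod G U) B. phi_eval M u V s = y"
      using tens_fsums_submod_mono by blast
  qed
qed

lemma relation_witnesses:
  assumes S: "|S| \<le>o |K|"
  shows "\<exists>G\<subseteq>elems. |G| \<le>o |K| \<and>
    (\<forall>V U u B xs. ((V, U, u), B, xs) \<in> formal_lists S \<longrightarrow>
       formal_sum xs \<in> tens_rel P u U V (qmod M U) B \<longrightarrow>
       formal_sum xs \<in> tens_rel P u U V (submod G U) B)"
proof -
  define Q where "Q = (\<lambda>((V, U, u), B, xs) F.
    formal_sum xs \<in> tens_rel P u U V (qmod M U) B \<longrightarrow> formal_sum xs \<in> tens_rel P u U V (submod F U) B)"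
  have witness: "\<exists>F. finite F \<and> F \<subseteq> elems \<and> Q i F" if "i \<in> formal_lists S" for i
  proof -
    obtain V U u B xs where i: "i = ((V, U, u), B, xs)" by (cases i) auto
    with that have U: "U \<in> cOb UC" by (simp add: formal_lists_def cat_mors_def)
    show ?thesis
    proof (cases "formal_sum xs \<in> tens_rel P u U V (qmod M U) B")
      case False
      then show ?thesis using i by (auto simp: Q_def)
    next
      case True
      then obtain F where F: "finite F" "F \<subseteq> Sigma (kOb (pcat P U)) (qcar M U)"
        "formal_sum xs \<in> tens_rel P u U V ((qmod M U)\<lparr>carrier := \<lambda>A. F `` {A}\<rparr>) B"
        by (rule tens_rel_finite_support) simp
      define F' where "F' = (\<lambda>(A, m). (U, A, m)) ` F"
      have "fam_of F' U = (\<lambda>A. F `` {A})" by (auto simp: F'_def fam_of_def)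
      with F(3) have "Q i F'" by (simp add: Q_def i)
      moreover have "finite F'" using F(1) by (simp add: F'_def)
      moreover have "F' \<subseteq> elems" using F(2) U by (auto simp: F'_def fam_elems_def)
      ultimately show ?thesis by blast
    qed
  qed
  have "\<exists>G\<subseteq>elems. |G| \<le>o |K| \<and> (\<forall>i\<in>formal_lists S. \<exists>F\<subseteq>G. Q i F)"
    by (rule small_witness_set[OF K_infinite card_formal_lists[OF S]]) (use witness in blast)
  then obtain G where G: "G \<subseteq> elems" "|G| \<le>o |K|" "\<forall>i\<in>formal_lists S. \<exists>F\<subseteq>G. Q i F"
    by blast
  show ?thesis
  proof (intro exI[of _ G] conjI allI impI G(1,2))
    fix V U u B xs assume "((V, U, u), B, xs) \<in> formal_lists S"
      and rel: "formal_sum xs \<in> tens_rel P u U V (qmod M U) B"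
    with G(3) obtain F where "F \<subseteq> G" "Q ((V, U, u), B, xs) F" by blast
    with rel have "F \<subseteq> G" "formal_sum xs \<in> tens_rel P u U V (submod F U) B"
      by (simp_all add: Q_def)
    then show "formal_sum xs \<in> tens_rel P u U V (submod G U) B"
      using tens_rel_submod_mono by blast
  qed
qed

lemma absorbing_extension:
  assumes S: "S \<subseteq> elems" "|S| \<le>o |K|"
  shows "\<exists>S'. S \<subseteq> S' \<and> S' \<subseteq> elems \<and> |S'| \<le>o |K| \<and> absorbs S S'"
proof -
  obtain G where G: "G \<subseteq> elems" "|G| \<le>o |K|"
    and preimages: "\<forall>V U u B y. (V, U, u) \<in> cat_mors UC \<longrightarrow> (V, B, y) \<in> S \<longrightarrow>
       (\<exists>s\<in>tens_fsums P u U V (submod G U) B. phi_eval M u V s = y)"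
    using preimage_witnesses[OF S] by blast
  obtain H where H: "H \<subseteq> elems" "|H| \<le>o |K|"
    and relations: "\<forall>V U u B xs. ((V, U, u), B, xs) \<in> formal_lists S \<longrightarrow>
       formal_sum xs \<in> tens_rel P u U V (qmod M U) B \<longrightarrow>
       formal_sum xs \<in> tens_rel P u U V (submod H U) B"
    using relation_witnesses[OF S(2)] by blast
  define S' where "S' = S \<union> operations S \<union> G \<union> H"
  have "absorbs S S'"
    unfolding absorbs_def
  proof (intro conjI allI impI)
    show "operations S \<subseteq> S'" by (auto simp: S'_def)
    show "\<exists>s\<in>tens_fsums P u U V (submod S' U) B. phi_eval M u V s = y"
      if "(V, U, u) \<in> cat_mors UC" "(V, B, y) \<in> S" for V U u B y
    proof -
      have "G \<subseteq> S'" by (auto simp: S'_def)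
      with preimages that tens_fsums_submod_mono[of G S'] show ?thesis by blast
    qed
    show "formal_sum xs \<in> tens_rel P u U V (submod S' U) B"
      if "((V, U, u), B, xs) \<in> formal_lists S" "formal_sum xs \<in> tens_rel P u U V (qmod M U) B"
      for V U u B xs
    proof -
      have "H \<subseteq> S'" by (auto simp: S'_def)
      with relations that tens_rel_submod_mono[of H S'] show ?thesis by blast
    qed
  qed
  moreover have "S' \<subseteq> elems" using S(1) operations_elems[OF S(1)] G(1) H(1) by (simp add: S'_def)
  moreover have "|S'| \<le>o |K|"
    unfolding S'_def using S(2) card_operations[OF S(2)] G(2) H(2)
    by (intro ordLeq_infinite_Un[OF K_infinite])
  moreover have "S \<subseteq> S'" by (auto simp: S'_def)
  ultimately show ?thesis by blast
qed

lemma absorbing_hull: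
  assumes S0: "S0 \<subseteq> elems" "|S0| \<le>o |K|"
  shows "\<exists>N. S0 \<subseteq> N \<and> N \<subseteq> elems \<and> |N| \<le>o |K| \<and> (\<forall>F. finite F \<and> F \<subseteq> N \<longrightarrow> absorbs F N)"
proof -
  define grow where
    "grow S = (SOME S'. S \<subseteq> S' \<and> S' \<subseteq> elems \<and> |S'| \<le>o |K| \<and> absorbs S S')" for S
  have grow: "S \<subseteq> grow S \<and> grow S \<subseteq> elems \<and> |grow S| \<le>o |K| \<and> absorbs S (grow S)"
    if "S \<subseteq> elems" "|S| \<le>o |K|" for S
    unfolding grow_def by (rule someI_ex[OF absorbing_extension[OF that]])
  define stage where "stage n = (grow ^^ n) S0" for n
  have stage: "stage n \<subseteq> elems \<and> |stage n| \<le>o |K|" for n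
    by (induction n) (simp_all add: stage_def S0 grow)
  have step: "stage n \<subseteq> stage (Suc n)" "absorbs (stage n) (stage (Suc n))" for n
    using grow[OF stage[THEN conjunct1] stage[THEN conjunct2]] by (simp_all add: stage_def)
  show ?thesis
  proof (intro exI conjI allI impI)
    show "S0 \<subseteq> (\<Union>n. stage n)" using stage_def[of 0] by auto
    show "(\<Union>n. stage n) \<subseteq> elems" using stage by blast
    show "|\<Union>n. stage n| \<le>o |K|"
      using stage K_infinite infinite_iff_card_of_nat
      by (intro card_of_UNION_ordLeq_infinite[OF K_infinite]) blast+
    fix F assume F: "finite F \<and> F \<subseteq> (\<Union>n. stage n)"
    then obtain n where "F \<subseteq> stage n"
      using finite_subset_incseq_Union[of stage F] step(1) by blast
    with step(2) show "absorbs F (\<Union>n. stage n)" by (rule absorbs_mono) blast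
  qed
qed

context
  fixes N :: "('u \<times> 'o \<times> 'm) set"
  assumes N_elems: "N \<subseteq> elems"
    and N_absorbs: "\<And>F. finite F \<Longrightarrow> F \<subseteq> N \<Longrightarrow> absorbs F N"
begin

lemma operations_absorbed: "finite F \<Longrightarrow> F \<subseteq> N \<Longrightarrow> operations F \<subseteq> N"
  using N_absorbs by (rule absorbs_operationsD)

lemma fam_of_N_subset: "fam_of N U A \<subseteq> qcar M U A"
  using N_elems by (auto simp: fam_of_def fam_elems_def)

lemma is_kmod_submod: "U \<in> cOb UC \<Longrightarrow> is_kmod (pcat P U) (submod N U)"
proof (rule is_kmod_restrict[OF is_klcat_pcat is_kmod_qmod])
  fix A x y assume "x \<in> fam_of N U A" "y \<in> fam_of N U A"
  then have "(U, A, x + y) \<in> N"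
    by (intro operations_absorbed[of "{(U, A, x), (U, A, y)}", THEN subsetD] operations_addI)
      (auto simp: fam_of_def)
  then show "x + y \<in> fam_of N U A" by (simp add: fam_of_def)
next
  fix A x assume "x \<in> fam_of N U A"
  then have "(U, A, - x) \<in> N"
    by (intro operations_absorbed[of "{(U, A, x)}", THEN subsetD] operations_negI)
      (auto simp: fam_of_def)
  then show "- x \<in> fam_of N U A" by (simp add: fam_of_def)
next
  fix A A' f x assume "U \<in> cOb UC" "A \<in> kOb (pcat P U)" "A' \<in> kOb (pcat P U)"
    "f \<in> kHom (pcat P U) A A'" "x \<in> fam_of N U A'"
  then have "(U, A, qact M U f x) \<in> N"
    by (intro operations_absorbed[of "{(U, A', x)}", THEN subsetD] operations_actI)
      (auto simp: fam_of_def prestack_mors_def)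
  then show "act (qmod M U) f x \<in> fam_of N U A" by (simp add: fam_of_def)
next
  fix A assume "U \<in> cOb UC" "A \<in> kOb (pcat P U)"
  then have "(U, A, 0) \<in> N"
    by (intro operations_absorbed[of "{}", THEN subsetD] operations_zeroI) auto
  then show "0 \<in> fam_of N U A" by (simp add: fam_of_def)
qed (use fam_of_N_subset in auto)

lemma psi_absorbed:
  assumes "(V, U, u) \<in> cat_mors UC" "x \<in> fam_of N U A"
  shows "qpsi M u A x \<in> fam_of N V (pobj P u A)"
proof -
  have "(V, pobj P u A, qpsi M u A x) \<in> N"
    using assms by (intro operations_absorbed[of "{(U, A, x)}", THEN subsetD] operations_psiI)
      (auto simp: fam_of_def)
  then show ?thesis by (simp add: fam_of_def)
qed

lemma phi_surj_submod:
  assumes "(V, U, u) \<in> cat_mors UC" "y \<in> fam_of N V B"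
  shows "\<exists>s\<in>tens_fsums P u U V (submod N U) B. phi_eval M u V s = y"
proof -
  have "absorbs {(V, B, y)} N" using assms(2) by (intro N_absorbs) (auto simp: fam_of_def)
  from this assms(1) show ?thesis by (rule absorbs_preimageD) simp
qed

lemma phi_inj_submod:
  assumes mor: "(V, U, u) \<in> cat_mors UC" and B: "B \<in> kOb (pcat P V)"
    and s: "s \<in> tens_fsums P u U V (submod N U) B" and phi: "phi_eval M u V s = 0"
  shows "s \<in> tens_rel P u U V (submod N U) B"
proof -
  have U: "U \<in> cOb UC" using mor by (simp add: cat_mors_def)
  obtain xs where xs: "set xs \<subseteq> tens_triples P u U V (submod N U) B"
    and diff: "(\<lambda>x. formal_sum xs x - s x) \<in> tens_rel P u U V (submod N U) B"
    using tens_fsums_unit_coefficients[OF is_kmod_submod[OF U] s] by blast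
  have rel_sub: "tens_rel P u U V (submod N U) B \<subseteq> tens_rel P u U V (qmod M U) B"
    using fam_of_N_subset by (intro tens_rel_mono) simp_all
  have "tens_fsums P u U V (submod N U) B \<subseteq> tens_fsums P u U V (qmod M U) B"
    using fam_of_N_subset by (intro tens_fsums_mono) simp
  with s have "s \<in> tens_fsums P u U V (qmod M U) B" by blast
  then have "s \<in> tens_rel P u U V (qmod M U) B" using phi_inj[OF mor B] phi by blast
  moreover have "(\<lambda>x. formal_sum xs x - s x) \<in> tens_rel P u U V (qmod M U) B" using diff rel_sub by blast
  ultimately have "(\<lambda>x. (formal_sum xs x - s x) + s x) \<in> tens_rel P u U V (qmod M U) B"
    unfolding tens_rel_def by (intro kspan.kspan_add)
  then have in_M: "formal_sum xs \<in> tens_rel P u U V (qmod M U) B" by simp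
  define F where "F = (\<lambda>(A, m, f). (U, A, m)) ` set xs"
  have "finite F" by (simp add: F_def)
  moreover have "F \<subseteq> N" using xs by (auto simp: F_def tens_triples_def fam_of_def)
  ultimately have "absorbs F N" by (rule N_absorbs)
  moreover have "set xs \<subseteq> tens_triples P u U V (submod F U) B"
    using xs by (force simp: F_def tens_triples_def fam_of_def)
  then have "((V, U, u), B, xs) \<in> formal_lists F" using mor B by (simp add: formal_lists_def)
  ultimately have "formal_sum xs \<in> tens_rel P u U V (submod N U) B"
    using in_M by (rule absorbs_relationD)
  from this diff have "(\<lambda>x. formal_sum xs x - (formal_sum xs x - s x)) \<in> tens_rel P u U V (submod N U) B"
    unfolding tens_rel_def by (rule kspan_diff)
  then show ?thesis by simp
qed

lemma is_qch_absorbing: "is_qch UC P (M\<lparr>qcar := fam_of N\<rparr>)"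
  by (rule is_qch_subfamily[OF M_qch fam_of_N_subset is_kmod_submod])
    (simp_all add: cat_mors_def psi_absorbed phi_surj_submod phi_inj_submod)

end

end

theorem proposition4p16:
  fixes UC :: "('u, 'f) smallcat"
    and P :: "('u, 'f, 'o, 'h::ab_group_add, 'k::comm_ring_1) prestack"
    and M :: "('u, 'f, 'o, 'h, 'm::ab_group_add, 'k) qmodule"
    and K :: "'c set"
    and X :: "'u \<Rightarrow> 'o \<Rightarrow> 'm set"
  assumes prestack: "is_prestack UC P"
    and geometric: "is_geometric TYPE('m) UC P"
    and kappa_aleph0: "cardle (UNIV :: nat set) K"
    and kappa_U: "cardle (cat_mors UC) K"
    and kappa_A: "cardle (prestack_mors UC P) K"
    and M_qch: "is_qch UC P M"
    and X_sub: "\<forall>U\<in>cOb UC. \<forall>A\<in>kOb (pcat P U). X U A \<subseteq> qcar M U A"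
    and X_card: "cardle (fam_elems UC P X) K"
  shows "\<exists>N :: 'u \<Rightarrow> 'o \<Rightarrow> 'm set.
           (\<forall>U\<in>cOb UC. \<forall>A\<in>kOb (pcat P U). X U A \<subseteq> N U A \<and> N U A \<subseteq> qcar M U A) \<and>
           is_qch UC P (M\<lparr>qcar := N\<rparr>) \<and>
           cardle (fam_elems UC P N) K"
proof -
  have K: "infinite K"
    using kappa_aleph0 infinite_iff_card_of_nat by blast
  interpret qch_bound UC P M K
    using prestack M_qch K kappa_U kappa_A by unfold_locales
  have X: "fam_elems UC P X \<subseteq> elems"
    using X_sub by (auto simp: fam_elems_def)
  obtain N where N: "fam_elems UC P X \<subseteq> N" "N \<subseteq> elems" "|N| \<le>o |K|"
    and absorbing: "\<forall>F. finite F \<and> F \<subseteq> N \<longrightarrow> absorbs F N"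
    using absorbing_hull[OF X X_card] by blast
  show ?thesis
  proof (intro exI[of _ "fam_of N"] conjI ballI)
    show "X U A \<subseteq> fam_of N U A" if "U \<in> cOb UC" "A \<in> kOb (pcat P U)" for U A
      using N(1) that by (auto simp: fam_elems_def fam_of_def)
    show "fam_of N U A \<subseteq> qcar M U A" for U A
      using N(2) by (auto simp: fam_of_def fam_elems_def)
    show "is_qch UC P (M\<lparr>qcar := fam_of N\<rparr>)"
      using N(2) absorbing by (intro is_qch_absorbing) blast+
    show "|fam_elems UC P (fam_of N)| \<le>o |K|"
      by (rule ordLeq_subset[OF fam_elems_fam_of N(3)])
  qed
qed

end
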